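(* Let $X$ satisfy assumptions (A) described in the context, with transition density $p_t$, and let $p_t^{(d+2)}$ be as in the context. If $x,y\in\mathbb{R}^d$ and $r>0$ satisfy $|x|<r<|y|$, then for every $t>0$ $$\left|\frac{\partial}{\partial x_1}p_t(x-y)\right|\le6\pi\Big(r\,p_t^{(d+2)}(r-|x|)+|y|\,p_t^{(d+2)}(|y|/2)\Big).$$
   Context: Assumptions (A): (H0) $X$ is a pure-jump isotropic Lévy process in $\mathbb{R}^d$ with characteristic exponent $\psi$ ($E^0e^{i\xi\cdot X_t}=e^{-t\psi(\xi)}$), whose Lévy measure is infinite with density $\nu(x)=\nu(|x|)$. (H1) $\nu(r)$ is nonincreasing, absolutely continuous, $-\nu'(r)/r$ nonincreasing (with $\nu(r)=-\int_r^\infty\nu'(\rho)d\rho$), and for some $a_1$: $\nu(r)\le a_1\nu(r+1)$ for $r\ge1$, $\nu(r)\le a_1\nu(2r)$ for $0<r\le1$. (H2) There is $a_2$ such that for every $x_0$, $r\in(0,1]$ and every $h\ge0$ on $\mathbb{R}^d$ harmonic in $B(x_0,r)$, $\sup_{B(x_0,r/2)}h\le a_2\inf_{B(x_0,r/2)}h$ (harmonic in the sense $f(x)=E^xf(X_{\tau_B})$ for bounded open $B$ with closure in the set). $p_t^{(d+2)}(x)=p_t^{(d+2)}(|x|)$ denotes the radial, radially nonincreasing transition density of the Lévy process in $\mathbb{R}^{d+2}$ with characteristic exponent $\xi\mapsto\psi(|\xi|)$; it satisfies $p_t^{(d+2)}(r)=-\frac{1}{2\pi r}\frac{d}{dr}p_t(r)$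 for $r>0$, where $p_t(x)=p_t(|x|)$. *)

theory Defs
  imports "HOL-Probability.Probability"
begin

text \<open>A Levy process on the probability space M: measurable, starts at 0, cadlag paths,
  independent and stationary increments.  Under P^x the process is x + X.\<close>

definition levy_process :: "'w measure \<Rightarrow> (real \<Rightarrow> 'w \<Rightarrow> 'a::euclidean_space) \<Rightarrow> bool" where
  "levy_process M X \<longleftrightarrow>
     prob_space M \<and>
     (\<forall>t\<ge>0. X t \<in> borel_measurable M) \<and>
     (\<forall>\<omega>\<in>space M. X 0 \<omega> = 0) \<and>
     (\<forall>\<omega>\<in>space M. \<forall>t\<ge>0. continuous (at_right t) (\<lambda>s. X s \<omega>) \<and>
         (t > 0 \<longrightarrow> (\<exists>l. ((\<lambda>s. X s \<omega>) \<longlongrightarrow> l) (at_left t)))) \<and>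
     (\<forall>(ts::nat \<Rightarrow> real) n. 0 \<le> ts 0 \<and> mono ts \<longrightarrow>
         prob_space.indep_vars M (\<lambda>_. borel) (\<lambda>k \<omega>. X (ts (Suc k)) \<omega> - X (ts k) \<omega>) {..<n}) \<and>
     (\<forall>s t. 0 \<le> s \<and> 0 \<le> t \<longrightarrow>
         distr M borel (\<lambda>\<omega>. X (t + s) \<omega> - X s \<omega>) = distr M borel (X t))"

definition exit_time :: "(real \<Rightarrow> 'w \<Rightarrow> 'a::real_normed_vector) \<Rightarrow> 'a set \<Rightarrow> 'a \<Rightarrow> 'w \<Rightarrow> real" where
  "exit_time X B x \<omega> = Inf {t. 0 \<le> t \<and> x + X t \<omega> \<notin> B}"

definition nonneg_harmonic_in ::
  "'w measure \<Rightarrow> (real \<Rightarrow> 'w \<Rightarrow> 'a::euclidean_space) \<Rightarrow> ('a \<Rightarrow> real) \<Rightarrow> 'a set \<Rightarrow> bool" where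
  "nonneg_harmonic_in M X f D \<longleftrightarrow>
     (\<forall>z. 0 \<le> f z) \<and> f \<in> borel_measurable borel \<and>
     (\<forall>B. open B \<and> bounded B \<and> closure B \<subseteq> D \<longrightarrow>
        (\<forall>x. ennreal (f x) = (\<integral>\<^sup>+\<omega>. ennreal (f (x + X (exit_time X B x \<omega>) \<omega>)) \<partial>M)))"

text \<open>(H0): X is a pure-jump isotropic Levy process with infinite Levy measure with radial density
  nu(|x|); its characteristic exponent is psi(xi) = Psi(|xi|) = int (1 - cos(xi.x)) nu(|x|) dx
  (Levy-Khintchine formula for a pure-jump isotropic process).\<close>
definition H0 :: "'w measure \<Rightarrow> (real \<Rightarrow> 'w \<Rightarrow> 'a::euclidean_space) \<Rightarrow> (real \<Rightarrow> real) \<Rightarrow> (real \<Rightarrow> real) \<Rightarrow> bool" where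
  "H0 M X Psi nu \<longleftrightarrow>
     levy_process M X \<and>
     (\<forall>\<rho>>0. 0 \<le> nu \<rho>) \<and>
     (\<integral>\<^sup>+x. ennreal (min 1 (norm x ^ 2) * nu (norm x)) \<partial>(lborel :: 'a measure)) < \<infinity> \<and>
     (\<integral>\<^sup>+x. ennreal (nu (norm x)) \<partial>(lborel :: 'a measure)) = \<infinity> \<and>
     (\<forall>\<xi>::'a. Psi (norm \<xi>) = (\<integral>x. (1 - cos (\<xi> \<bullet> x)) * nu (norm x) \<partial>lborel)) \<and>
     (\<forall>t\<ge>0. \<forall>\<xi>::'a. (\<integral>\<omega>. cis (\<xi> \<bullet> X t \<omega>) \<partial>M) = complex_of_real (exp (- t * Psi (norm \<xi>))))"

definition H1 :: "(real \<Rightarrow> real) \<Rightarrow> bool" where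
  "H1 nu \<longleftrightarrow>
     (\<forall>r s. 0 < r \<and> r \<le> s \<longrightarrow> nu s \<le> nu r) \<and>
     (\<exists>nu'. (\<forall>r>0. set_integrable lborel {r..} nu' \<and> nu r = - (LBINT \<rho>:{r..}. nu' \<rho>)) \<and>
            (\<forall>r s. 0 < r \<and> r \<le> s \<longrightarrow> - nu' s / s \<le> - nu' r / r)) \<and>
     (\<exists>a1. (\<forall>r\<ge>1. nu r \<le> a1 * nu (r + 1)) \<and> (\<forall>r. 0 < r \<and> r \<le> 1 \<longrightarrow> nu r \<le> a1 * nu (2 * r)))"

definition H2 :: "'w measure \<Rightarrow> (real \<Rightarrow> 'w \<Rightarrow> 'a::euclidean_space) \<Rightarrow> bool" where
  "H2 M X \<longleftrightarrow>
     (\<exists>a2. \<forall>x0 r h. 0 < r \<and> r \<le> 1 \<and> nonneg_harmonic_in M X h (ball x0 r) \<longrightarrow>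
         (\<forall>z\<in>ball x0 (r/2). \<forall>w\<in>ball x0 (r/2). h z \<le> a2 * h w))"

definition assumptions_A :: "'w measure \<Rightarrow> (real \<Rightarrow> 'w \<Rightarrow> 'a::euclidean_space) \<Rightarrow> (real \<Rightarrow> real) \<Rightarrow> (real \<Rightarrow> real) \<Rightarrow> bool" where
  "assumptions_A M X Psi nu \<longleftrightarrow> H0 M X Psi nu \<and> H1 nu \<and> H2 M X"

definition levy_transition_density :: "(real \<Rightarrow> real) \<Rightarrow> (real \<Rightarrow> 'a::euclidean_space \<Rightarrow> real) \<Rightarrow> bool" where
  "levy_transition_density Psi q \<longleftrightarrow>
     (\<forall>t>0. (\<forall>z. 0 \<le> q t z) \<and> integrable lborel (q t) \<and>
        (\<forall>\<xi>. (\<integral>z. cis (\<xi> \<bullet> z) * complex_of_real (q t z) \<partial>lborel) = complex_of_real (exp (- t * Psi (norm \<xi>)))))"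

end

theory Submission
  imports Defs
begin

text \<open>Write \<open>z = x - y\<close>. As \<open>p_t\<close> is radial with \<open>p_t'(\<rho>) = -2\<pi>\<rho> p_t^(d+2)(\<rho>)\<close>, the chain
  rule gives \<open>|\<partial>p_t(z)/\<partial>x_1| \<le> 2\<pi> |z| p_t^(d+2)(|z|)\<close>. If \<open>|y| \<ge> 2|x|\<close> then
  \<open>|y|/2 \<le> |z| \<le> 3|y|/2\<close>, otherwise \<open>r - |x| \<le> |z| \<le> 3r\<close>; either way monotonicity of
  \<open>p_t^(d+2)\<close> bounds \<open>|z| p_t^(d+2)(|z|)\<close> by three times one of the two terms.\<close>

lemma deriv_radial_along:
  fixes f :: "real \<Rightarrow> real" and z v :: "'a::real_inner"
  assumes "z \<noteq> 0" and "(f has_real_derivative D) (at (norm z))"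
  shows "deriv (\<lambda>h. f (norm (z + h *\<^sub>R v))) 0 = D * (v \<bullet> sgn z)"
proof -
  have "((\<lambda>h::real. z + h *\<^sub>R v) has_derivative (\<lambda>h. h *\<^sub>R v)) (at 0)"
    by (auto intro!: derivative_eq_intros)
  from has_derivative_compose[OF this, of norm "\<lambda>w. w \<bullet> sgn z"]
  have "((\<lambda>h::real. norm (z + h *\<^sub>R v)) has_derivative (\<lambda>h. h * (v \<bullet> sgn z))) (at 0)"
    using has_derivative_norm[OF assms(1)] by (simp add: o_def)
  moreover have "(\<lambda>h::real. h * (v \<bullet> sgn z)) = (*) (v \<bullet> sgn z)"
    by (simp add: fun_eq_iff mult.commute)
  ultimately have "((\<lambda>h::real. norm (z + h *\<^sub>R v)) has_real_derivative v \<bullet> sgn z) (at 0)"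
    by (simp add: has_field_derivative_def)
  from DERIV_chain2[OF _ this, of f D] assms(2)
  show ?thesis by (intro DERIV_imp_deriv) simp
qed

lemma levy_transition_density_radial_nonneg:
  assumes "levy_transition_density Psi (\<lambda>s (z::'a::euclidean_space). q s (norm z))"
    and "0 < t" and "0 \<le> \<rho>"
  shows "0 \<le> q t \<rho>"
proof -
  have "0 \<le> q t (norm (\<rho> *\<^sub>R (SOME b. b \<in> (Basis :: 'a set))))"
    using assms(1,2) unfolding levy_transition_density_def by blast
  then show ?thesis
    using assms(3) by (simp add: SOME_Basis)
qed

lemma decreasing_weight_le_two_scales:
  fixes g :: "real \<Rightarrow> real" and a b r s :: real
  assumes noninc: "\<And>u v. 0 < u \<Longrightarrow> u \<le> v \<Longrightarrow> g v \<le> g u"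
    and nonneg: "\<And>u. 0 < u \<Longrightarrow> 0 \<le> g u"
    and "0 \<le> a" "a < r" "r < b" "b - a \<le> s" "s \<le> a + b"
  shows "s * g s \<le> 3 * (r * g (r - a) + b * g (b / 2))"
proof (cases "2 * a \<le> b")
  case True
  then have "s * g s \<le> (3/2 * b) * g (b / 2)"
    using assms(3-7) noninc[of "b / 2" s] nonneg[of s] by (intro mult_mono) auto
  moreover have "0 \<le> r * g (r - a)" "0 \<le> b * g (b / 2)"
    using assms(3-5) nonneg[of "r - a"] nonneg[of "b / 2"] by simp_all
  ultimately show ?thesis by (simp add: distrib_left)
next
  case False
  then have "s * g s \<le> (3 * r) * g (r - a)"
    using assms(3-7) noninc[of "r - a" s] nonneg[of s] by (intro mult_mono) auto
  moreover have "0 \<le> b * g (b / 2)"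
    using assms(3-5) nonneg[of "b / 2"] by simp
  ultimately show ?thesis by (simp add: distrib_left mult.assoc)
qed

theorem lemma6p2:
  fixes M :: "'w measure" and X :: "real \<Rightarrow> 'w \<Rightarrow> real^'n"
    and Psi nu :: "real \<Rightarrow> real" and P Q :: "real \<Rightarrow> real \<Rightarrow> real"
    and x y :: "real^'n" and r t :: real and i :: 'n
  assumes A: "assumptions_A M X Psi nu"
    and dens: "\<forall>s>0. distr M lborel (X s) = density lborel (\<lambda>z. ennreal (P s (norm z)))"
    and dens2: "levy_transition_density Psi (\<lambda>s (z::real^('n + 2)). Q s (norm z))"
    and Q_noninc: "\<forall>s>0. \<forall>a b. 0 < a \<and> a \<le> b \<longrightarrow> Q s b \<le> Q s a"
    and Q_deriv: "\<forall>s>0. \<forall>\<rho>>0. (P s has_real_derivative (- 2 * pi * \<rho> * Q s \<rho>)) (at \<rho>)"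
    and "norm x < r" and "r < norm y" and "0 < t"
  shows "\<bar>deriv (\<lambda>h. P t (norm (x + h *\<^sub>R axis i 1 - y))) 0\<bar>
           \<le> 6 * pi * (r * Q t (r - norm x) + norm y * Q t (norm y / 2))"
proof -
  define z where "z = x - y"
  have z_bounds: "norm y - norm x \<le> norm z" "norm z \<le> norm x + norm y"
    unfolding z_def by (metis norm_minus_commute norm_triangle_ineq2) (rule norm_triangle_ineq4)
  then have "z \<noteq> 0" using assms(6,7) by auto
  have Q_nonneg: "\<And>\<rho>. 0 < \<rho> \<Longrightarrow> 0 \<le> Q t \<rho>"
    using levy_transition_density_radial_nonneg[OF dens2 \<open>0 < t\<close>] by simp
  have "(\<lambda>h. P t (norm (x + h *\<^sub>R axis i 1 - y))) = (\<lambda>h. P t (norm (z + h *\<^sub>R axis i 1)))"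
    by (simp add: z_def algebra_simps)
  moreover have "(P t has_real_derivative - 2 * pi * norm z * Q t (norm z)) (at (norm z))"
    using Q_deriv \<open>0 < t\<close> \<open>z \<noteq> 0\<close> by simp
  ultimately have "deriv (\<lambda>h. P t (norm (x + h *\<^sub>R axis i 1 - y))) 0
      = - 2 * pi * norm z * Q t (norm z) * (axis i 1 \<bullet> sgn z)"
    using deriv_radial_along[OF \<open>z \<noteq> 0\<close>] by simp
  moreover have "\<bar>axis i 1 \<bullet> sgn z\<bar> \<le> 1"
    using Cauchy_Schwarz_ineq2[of "axis i (1::real)" "sgn z"] \<open>z \<noteq> 0\<close> by (simp add: norm_sgn)
  ultimately have "\<bar>deriv (\<lambda>h. P t (norm (x + h *\<^sub>R axis i 1 - y))) 0\<bar>
      \<le> 2 * pi * (norm z * Q t (norm z))"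
    using Q_nonneg[of "norm z"] \<open>z \<noteq> 0\<close>
    by (simp add: abs_mult mult_left_le)
  also have "\<dots> \<le> 2 * pi * (3 * (r * Q t (r - norm x) + norm y * Q t (norm y / 2)))"
    using decreasing_weight_le_two_scales[of "Q t" "norm x" r "norm y" "norm z"]
      Q_noninc Q_nonneg z_bounds assms(6-8) by auto
  finally show ?thesis by (simp add: algebra_simps)
qed

end
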